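(* Let $C=\sup_{\xi>0}|1-e^{-\xi}|\,|\xi|^{-1}$ and $B=\sup_{0<\xi\le\log 2}|\xi|\,|1-e^{-\xi}|^{-1}$. For probability densities $f,g$ on $\mathbb{N}$ and every $r\ge1$, $$d_r^*(f,g)\le C^r d_r(f,g)\qquad\text{and}\qquad d_r(f,g)\le\max\{2^{r+1},B^rd_r^*(f,g)\}.$$ Moreover, if $M_1(f)=M_1(g)$ and $M_r(f),M_r(g)$ are finite for some $r\in(1,2]$, then $d_r^*(f,g)\le c_r[M_r(f)+M_r(g)]$ for a suitable constant $c_r$ depending only on $r$.
   Context: For a probability density $f$ on $\mathbb{N}$: $\hat f(z)=\sum_vz^vf(v)$, $z\in[0,1]$; $\tilde f(\xi)=\sum_ve^{-\xi v}f(v)$, $\xi>0$; $M_r(f)=\sum_vv^rf(v)$. The metrics are $d_r(f,g)=\sup_{z\in(0,1)}|\hat f(z)-\hat g(z)|/|1-z|^r$ and $d_r^*(f,g)=\sup_{\xi>0}|\tilde f(\xi)-\tilde g(\xi)|/\xi^r$. *)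

theory Defs
  imports "HOL-Analysis.Analysis"
begin

definition prob_density :: "(nat \<Rightarrow> real) \<Rightarrow> bool" where
  "prob_density f \<longleftrightarrow> (\<forall>v. 0 \<le> f v) \<and> f sums 1"

definition gen_fun :: "(nat \<Rightarrow> real) \<Rightarrow> real \<Rightarrow> real" where
  "gen_fun f z = (\<Sum>v. z ^ v * f v)"

definition lap_fun :: "(nat \<Rightarrow> real) \<Rightarrow> real \<Rightarrow> real" where
  "lap_fun f \<xi> = (\<Sum>v. exp (- \<xi> * real v) * f v)"

definition moment :: "real \<Rightarrow> (nat \<Rightarrow> real) \<Rightarrow> ereal" where
  "moment r f = (\<Sum>v. ereal (real v powr r * f v))"

definition d_metric :: "real \<Rightarrow> (nat \<Rightarrow> real) \<Rightarrow> (nat \<Rightarrow> real) \<Rightarrow> ereal" where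
  "d_metric r f g = (SUP z\<in>{0<..<1}. ereal (\<bar>gen_fun f z - gen_fun g z\<bar> / \<bar>1 - z\<bar> powr r))"

definition d_star :: "real \<Rightarrow> (nat \<Rightarrow> real) \<Rightarrow> (nat \<Rightarrow> real) \<Rightarrow> ereal" where
  "d_star r f g = (SUP \<xi>\<in>{0<..}. ereal (\<bar>lap_fun f \<xi> - lap_fun g \<xi>\<bar> / \<bar>\<xi>\<bar> powr r))"

definition constC :: real where
  "constC = (SUP \<xi>\<in>{0<..}. \<bar>1 - exp (- \<xi>)\<bar> / \<bar>\<xi>\<bar>)"

definition constB :: real where
  "constB = (SUP \<xi>\<in>{0<..ln 2}. \<bar>\<xi>\<bar> / \<bar>1 - exp (- \<xi>)\<bar>)"

end

theory Submission
  imports Defs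
begin

text \<open>
  Substituting \<open>z = exp (- \<xi>)\<close> turns the Laplace transform into the generating function,
  so \<open>d\<^sub>r\<close> and \<open>d\<^sub>r\<^sup>*\<close> differ only in the normalisers \<open>\<bar>1 - z\<bar> powr r\<close> and \<open>\<xi> powr r\<close>.
  Their ratio is at most \<open>C powr r\<close> one way and, for \<open>\<xi> \<le> ln 2\<close> (that is, \<open>z \<ge> 1/2\<close>),
  at most \<open>B powr r\<close> the other way; for \<open>z < 1/2\<close> both generating functions lie in
  \<open>[0, 1]\<close>, so the quotient is at most \<open>2 powr r\<close>.
  If \<open>f\<close> and \<open>g\<close> have equal mass and equal mean, the difference of their Laplace transforms
  is \<open>\<Sum>v. (exp (- \<xi> v) - 1 + \<xi> v) (f v - g v)\<close>, and
  \<open>0 \<le> exp (- x) - 1 + x \<le> min x x\<^sup>2 \<le> x powr r\<close> for \<open>1 \<le> r \<le> 2\<close>, so \<open>c\<^sub>r = 1\<close> works.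
\<close>

lemma prob_density_nonneg: "prob_density f \<Longrightarrow> 0 \<le> f v"
  and prob_density_summable: "prob_density f \<Longrightarrow> summable f"
  and prob_density_suminf: "prob_density f \<Longrightarrow> suminf f = 1"
  by (auto simp: prob_density_def sums_iff)

lemma summable_power_mult_prob_density:
  assumes f: "prob_density f" and z: "\<bar>z\<bar> \<le> 1"
  shows "summable (\<lambda>v. z ^ v * f v)"
proof (rule summable_comparison_test'[OF prob_density_summable[OF f]])
  fix v :: nat
  have "\<bar>z\<bar> ^ v \<le> 1" using z by (simp add: power_le_one)
  then show "norm (z ^ v * f v) \<le> f v"
    using prob_density_nonneg[OF f, of v] by (simp add: abs_mult power_abs mult_left_le_one_le)
qed

lemma gen_fun_nonneg:
  assumes "prob_density f" "0 \<le> z" "z \<le> 1"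
  shows "0 \<le> gen_fun f z"
  unfolding gen_fun_def
proof (rule suminf_nonneg)
  show "summable (\<lambda>v. z ^ v * f v)" using assms by (intro summable_power_mult_prob_density) auto
  show "0 \<le> z ^ v * f v" for v using assms prob_density_nonneg by simp
qed

lemma gen_fun_le_one:
  assumes f: "prob_density f" and z: "0 \<le> z" "z \<le> 1"
  shows "gen_fun f z \<le> 1"
proof -
  have "gen_fun f z \<le> suminf f" unfolding gen_fun_def
  proof (rule suminf_le)
    fix v
    show "z ^ v * f v \<le> f v"
      using prob_density_nonneg[OF f, of v] z by (simp add: power_le_one mult_left_le_one_le)
  qed (use assms in \<open>auto intro: summable_power_mult_prob_density prob_density_summable\<close>)
  then show ?thesis using prob_density_suminf[OF f] by simp
qed

lemma lap_fun_eq_gen_fun: "lap_fun f \<xi> = gen_fun f (exp (- \<xi>))"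
  unfolding lap_fun_def gen_fun_def by (simp add: exp_of_nat_mult[symmetric] mult.commute)

lemma constC_upper:
  fixes \<xi> :: real
  assumes "0 < \<xi>"
  shows "\<bar>1 - exp (- \<xi>)\<bar> / \<bar>\<xi>\<bar> \<le> constC"
proof -
  have "\<bar>1 - exp (- x)\<bar> / \<bar>x\<bar> \<le> 1" if "0 < x" for x :: real
  proof -
    have "1 - x \<le> exp (- x)" using exp_ge_add_one_self[of "- x"] by simp
    moreover have "exp (- x) \<le> 1" using that by simp
    ultimately show ?thesis using that by (simp add: divide_le_eq)
  qed
  then have "bdd_above ((\<lambda>\<xi>::real. \<bar>1 - exp (- \<xi>)\<bar> / \<bar>\<xi>\<bar>) ` {0<..})"
    by (intro bdd_aboveI2[where M = 1]) auto
  then show ?thesis unfolding constC_def using assms by (intro cSUP_upper) auto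
qed

lemma constB_upper:
  fixes \<xi> :: real
  assumes "0 < \<xi>" "\<xi> \<le> ln 2"
  shows "\<bar>\<xi>\<bar> / \<bar>1 - exp (- \<xi>)\<bar> \<le> constB"
proof -
  have "\<bar>x\<bar> / \<bar>1 - exp (- x)\<bar> \<le> 2" if x: "0 < x" "x \<le> ln 2" for x :: real
  proof -
    have pos: "0 < 1 - exp (- x)" using x by simp
    have "exp x \<le> 2" using x by (metis exp_ln exp_le_cancel_iff zero_less_numeral)
    have "x \<le> exp x - 1" using exp_ge_add_one_self[of x] by linarith
    also have "\<dots> = (1 - exp (- x)) * exp x" by (simp add: algebra_simps exp_minus)
    also have "\<dots> \<le> (1 - exp (- x)) * 2" using \<open>exp x \<le> 2\<close> pos by (intro mult_left_mono) auto
    finally show ?thesis using x pos by (simp add: divide_le_eq)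
  qed
  then have "bdd_above ((\<lambda>\<xi>::real. \<bar>\<xi>\<bar> / \<bar>1 - exp (- \<xi>)\<bar>) ` {0<..ln 2})"
    by (intro bdd_aboveI2[where M = 2]) auto
  then show ?thesis unfolding constB_def using assms by (intro cSUP_upper) auto
qed

lemma exp_minus_sub_one_add_nonneg: "0 \<le> exp (- x) - 1 + x" for x :: real
  using exp_ge_add_one_self[of "- x"] by simp

lemma exp_minus_sub_one_add_le_square:
  fixes x :: real
  assumes "0 \<le> x"
  shows "exp (- x) - 1 + x \<le> x\<^sup>2"
proof -
  have q: "1 + x + x\<^sup>2 / 2 \<le> exp x" using exp_lower_Taylor_quadratic[OF assms] .
  have qpos: "0 < 1 + x + x\<^sup>2 / 2" using assms by (simp add: add_pos_nonneg)
  have "(1 - x + x\<^sup>2) * (1 + x + x\<^sup>2 / 2) = 1 + x\<^sup>2 / 2 + x ^ 3 / 2 + x ^ 4 / 2"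
    by (simp add: field_simps power2_eq_square power3_eq_cube power4_eq_xxxx)
  then have prod: "1 \<le> (1 - x + x\<^sup>2) * (1 + x + x\<^sup>2 / 2)" using assms by simp
  have "exp (- x) = 1 / exp x" by (simp add: exp_minus field_simps)
  also have "\<dots> \<le> 1 / (1 + x + x\<^sup>2 / 2)" using q qpos by (intro divide_left_mono) auto
  also have "\<dots> \<le> 1 - x + x\<^sup>2" using prod qpos by (simp add: divide_le_eq mult.commute)
  finally show ?thesis by simp
qed

lemma exp_minus_sub_one_add_le_powr:
  fixes x r :: real
  assumes x: "0 \<le> x" and r: "1 \<le> r" "r \<le> 2"
  shows "exp (- x) - 1 + x \<le> x powr r"
proof (cases "x \<le> 1")
  case True
  have "exp (- x) - 1 + x \<le> x powr 2"
    using exp_minus_sub_one_add_le_square[OF x] x by simp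
  also have "\<dots> \<le> x powr r" using True x r by (intro powr_mono') auto
  finally show ?thesis .
next
  case False
  have "exp (- x) - 1 + x \<le> x powr 1" using x by simp
  also have "\<dots> \<le> x powr r" using False r by (intro powr_mono) auto
  finally show ?thesis .
qed

lemma summable_moment:
  assumes f: "prob_density f" and fin: "moment r f < \<infinity>"
  shows "summable (\<lambda>v. real v powr r * f v)"
proof (rule summable_ereal)
  show "(\<Sum>v. ereal (real v powr r * f v)) \<noteq> \<infinity>" using fin unfolding moment_def by simp
qed (simp add: prob_density_nonneg[OF f])

lemma moment_eq_suminf:
  "summable (\<lambda>v. real v powr r * f v) \<Longrightarrow> moment r f = ereal (\<Sum>v. real v powr r * f v)"
  unfolding moment_def by (rule suminf_ereal')

lemma summable_moment_mono:
  assumes f: "prob_density f" and sum: "summable (\<lambda>v. real v powr r * f v)" and "s \<le> r"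
  shows "summable (\<lambda>v. real v powr s * f v)"
proof (rule summable_comparison_test'[OF sum])
  fix v :: nat
  have "real v powr s \<le> real v powr r"
    using \<open>s \<le> r\<close> by (cases "v = 0") (auto intro: powr_mono)
  then show "norm (real v powr s * f v) \<le> real v powr r * f v"
    using prob_density_nonneg[OF f, of v] by (simp add: mult_right_mono)
qed

lemma lap_fun_diff_sums:
  assumes f: "prob_density f" and g: "prob_density g" and \<xi>: "0 \<le> \<xi>"
    and sf: "summable (\<lambda>v. real v * f v)" and sg: "summable (\<lambda>v. real v * g v)"
    and mean: "(\<Sum>v. real v * f v) = (\<Sum>v. real v * g v)"
  shows "(\<lambda>v. (exp (- \<xi> * real v) - 1 + \<xi> * real v) * (f v - g v))
           sums (lap_fun f \<xi> - lap_fun g \<xi>)"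
proof -
  have lap: "(\<lambda>v. exp (- \<xi> * real v) * h v) sums lap_fun h \<xi>" if "prob_density h" for h
    using summable_power_mult_prob_density[OF that, of "exp (- \<xi>)"] \<xi>
    unfolding lap_fun_def by (simp add: exp_of_nat_mult[symmetric] mult.commute summable_sums)
  have "(\<lambda>v. (exp (- \<xi> * real v) * f v - exp (- \<xi> * real v) * g v) - (f v - g v)
             + \<xi> * (real v * f v - real v * g v))
        sums ((lap_fun f \<xi> - lap_fun g \<xi>) - (suminf f - suminf g)
             + \<xi> * ((\<Sum>v. real v * f v) - (\<Sum>v. real v * g v)))"
    by (intro sums_add sums_diff sums_mult lap f g summable_sums sf sg prob_density_summable)
  then show ?thesis
    using mean prob_density_suminf[OF f] prob_density_suminf[OF g]
    by (simp add: algebra_simps)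
qed

lemma abs_lap_fun_diff_le:
  fixes r \<xi> :: real
  assumes f: "prob_density f" and g: "prob_density g" and r: "1 \<le> r" "r \<le> 2" and \<xi>: "0 \<le> \<xi>"
    and mf: "summable (\<lambda>v. real v powr r * f v)" and mg: "summable (\<lambda>v. real v powr r * g v)"
    and mean: "(\<Sum>v. real v * f v) = (\<Sum>v. real v * g v)"
  shows "\<bar>lap_fun f \<xi> - lap_fun g \<xi>\<bar>
           \<le> \<xi> powr r * ((\<Sum>v. real v powr r * f v) + (\<Sum>v. real v powr r * g v))"
proof -
  define h where "h v = (exp (- \<xi> * real v) - 1 + \<xi> * real v) * (f v - g v)" for v
  define b where "b v = \<xi> powr r * (real v powr r * f v + real v powr r * g v)" for v
  have first_moment: "summable (\<lambda>v. real v * f v)" "summable (\<lambda>v. real v * g v)"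
    using summable_moment_mono[OF f mf r(1)] summable_moment_mono[OF g mg r(1)] by simp_all
  have h_sums: "h sums (lap_fun f \<xi> - lap_fun g \<xi>)"
    unfolding h_def by (rule lap_fun_diff_sums[OF f g \<xi> first_moment mean])
  have h_le: "\<bar>h v\<bar> \<le> b v" for v
  proof -
    have "\<bar>h v\<bar> = (exp (- (\<xi> * real v)) - 1 + \<xi> * real v) * \<bar>f v - g v\<bar>"
      using exp_minus_sub_one_add_nonneg[of "\<xi> * real v"] by (simp add: h_def abs_mult)
    also have "\<dots> \<le> (\<xi> * real v) powr r * (f v + g v)"
      using exp_minus_sub_one_add_nonneg[of "\<xi> * real v"] \<xi> r
        prob_density_nonneg[OF f, of v] prob_density_nonneg[OF g, of v]
      by (intro mult_mono exp_minus_sub_one_add_le_powr) auto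
    also have "\<dots> = b v" using \<xi> by (simp add: b_def powr_mult algebra_simps)
    finally show ?thesis .
  qed
  have b_sums: "b sums (\<xi> powr r * ((\<Sum>v. real v powr r * f v) + (\<Sum>v. real v powr r * g v)))"
    unfolding b_def by (intro sums_mult sums_add summable_sums mf mg)
  then have "summable b" by (simp add: sums_iff)
  then have abs_h: "summable (\<lambda>v. \<bar>h v\<bar>)"
    by (rule summable_comparison_test') (simp add: h_le)
  have "\<bar>suminf h\<bar> \<le> (\<Sum>v. \<bar>h v\<bar>)" using summable_rabs[OF abs_h] .
  also have "\<dots> \<le> suminf b" by (rule suminf_le[OF h_le abs_h \<open>summable b\<close>])
  finally have "\<bar>suminf h\<bar> \<le> suminf b" .
  then show ?thesis using h_sums b_sums by (simp add: sums_iff)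
qed

lemma abs_div_powr_rescale:
  fixes a w y r K :: real and D :: ereal
  assumes "0 < w" "0 < y" "ereal (\<bar>a\<bar> / w powr r) \<le> D" "(w / y) powr r \<le> K"
  shows "ereal (\<bar>a\<bar> / y powr r) \<le> ereal K * D"
proof -
  have "\<bar>a\<bar> / y powr r = (w / y) powr r * (\<bar>a\<bar> / w powr r)"
    using assms(1,2) by (simp add: powr_divide field_simps)
  then have "ereal (\<bar>a\<bar> / y powr r) = ereal ((w / y) powr r) * ereal (\<bar>a\<bar> / w powr r)"
    by simp
  also have "\<dots> \<le> ereal K * D"
  proof (rule ereal_mult_mono)
    show "0 \<le> ereal K" using order_trans[OF powr_ge_zero assms(4)] by simp
  qed (use assms(3,4) in auto)
  finally show ?thesis .
qed

lemma d_star_le_d_metric: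
  assumes "0 \<le> r"
  shows "d_star r f g \<le> ereal (constC powr r) * d_metric r f g"
  unfolding d_star_def
proof (rule SUP_least)
  fix \<xi> :: real assume "\<xi> \<in> {0<..}"
  then have \<xi>: "0 < \<xi>" by simp
  define z where "z = exp (- \<xi>)"
  have z: "0 < z" "z < 1" using \<xi> by (auto simp: z_def)
  have "ereal (\<bar>gen_fun f z - gen_fun g z\<bar> / \<bar>1 - z\<bar> powr r) \<le> d_metric r f g"
    unfolding d_metric_def using z by (intro SUP_upper) auto
  moreover have "(\<bar>1 - z\<bar> / \<bar>\<xi>\<bar>) powr r \<le> constC powr r"
    using constC_upper[OF \<xi>] assms by (intro powr_mono2) (auto simp: z_def)
  ultimately show "ereal (\<bar>lap_fun f \<xi> - lap_fun g \<xi>\<bar> / \<bar>\<xi>\<bar> powr r)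
                     \<le> ereal (constC powr r) * d_metric r f g"
    unfolding lap_fun_eq_gen_fun z_def[symmetric] using z \<xi>
    by (intro abs_div_powr_rescale[where w = "\<bar>1 - z\<bar>"]) auto
qed

lemma d_metric_le_d_star:
  assumes f: "prob_density f" and g: "prob_density g" and r: "0 \<le> r"
  shows "d_metric r f g \<le> max (ereal (2 powr (r + 1))) (ereal (constB powr r) * d_star r f g)"
  unfolding d_metric_def
proof (rule SUP_least)
  fix z :: real assume "z \<in> {0<..<1}"
  then have z: "0 < z" "z < 1" by auto
  show "ereal (\<bar>gen_fun f z - gen_fun g z\<bar> / \<bar>1 - z\<bar> powr r)
        \<le> max (ereal (2 powr (r + 1))) (ereal (constB powr r) * d_star r f g)"
  proof (cases "z < 1 / 2")
    case True
    have z01: "0 \<le> z" "z \<le> 1" using z by auto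
    have "\<bar>gen_fun f z - gen_fun g z\<bar> \<le> 1"
      using gen_fun_nonneg[OF f z01] gen_fun_le_one[OF f z01] gen_fun_nonneg[OF g z01]
        gen_fun_le_one[OF g z01] by linarith
    moreover have "(1 / 2) powr r \<le> \<bar>1 - z\<bar> powr r" using True r by (intro powr_mono2) auto
    ultimately have "\<bar>gen_fun f z - gen_fun g z\<bar> / \<bar>1 - z\<bar> powr r \<le> 1 / (1 / 2) powr r"
      by (intro frac_le) auto
    also have "\<dots> = 2 powr r" by (simp add: powr_divide)
    also have "\<dots> \<le> 2 powr (r + 1)" by (intro powr_mono) auto
    finally show ?thesis by (simp add: le_max_iff_disj)
  next
    case False
    define \<xi> where "\<xi> = - ln z"
    have z_eq: "exp (- \<xi>) = z" and \<xi>: "0 < \<xi>" using z by (simp_all add: \<xi>_def)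
    have "ln (1 / 2) \<le> ln z" using False z by simp
    then have "\<xi> \<le> ln 2" by (simp add: \<xi>_def ln_div)
    then have "(\<bar>\<xi>\<bar> / \<bar>1 - z\<bar>) powr r \<le> constB powr r"
      using constB_upper[OF \<xi>] z_eq r by (intro powr_mono2) auto
    moreover have "ereal (\<bar>lap_fun f \<xi> - lap_fun g \<xi>\<bar> / \<bar>\<xi>\<bar> powr r) \<le> d_star r f g"
      unfolding d_star_def using \<xi> by (intro SUP_upper) auto
    ultimately have "ereal (\<bar>gen_fun f z - gen_fun g z\<bar> / \<bar>1 - z\<bar> powr r)
                       \<le> ereal (constB powr r) * d_star r f g"
      unfolding lap_fun_eq_gen_fun z_eq using z \<xi>
      by (intro abs_div_powr_rescale[where w = "\<bar>\<xi>\<bar>"]) auto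
    then show ?thesis by (simp add: le_max_iff_disj)
  qed
qed

lemma d_star_le_moment_sum:
  assumes f: "prob_density f" and g: "prob_density g" and r: "1 \<le> r" "r \<le> 2"
    and mean: "moment 1 f = moment 1 g" and mf: "moment r f < \<infinity>" and mg: "moment r g < \<infinity>"
  shows "d_star r f g \<le> moment r f + moment r g"
  unfolding d_star_def
proof (rule SUP_least)
  fix \<xi> :: real assume "\<xi> \<in> {0<..}"
  then have \<xi>: "0 < \<xi>" by simp
  have sf: "summable (\<lambda>v. real v powr r * f v)" and sg: "summable (\<lambda>v. real v powr r * g v)"
    using summable_moment f g mf mg by blast+
  have "(\<Sum>v. real v * f v) = (\<Sum>v. real v * g v)"
    using mean moment_eq_suminf[OF summable_moment_mono[OF f sf r(1)]]
      moment_eq_suminf[OF summable_moment_mono[OF g sg r(1)]] by simp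
  then have "\<bar>lap_fun f \<xi> - lap_fun g \<xi>\<bar>
               \<le> \<xi> powr r * ((\<Sum>v. real v powr r * f v) + (\<Sum>v. real v powr r * g v))"
    using \<xi> by (intro abs_lap_fun_diff_le[OF f g r _ sf sg]) auto
  then show "ereal (\<bar>lap_fun f \<xi> - lap_fun g \<xi>\<bar> / \<bar>\<xi>\<bar> powr r) \<le> moment r f + moment r g"
    using \<xi> by (simp add: moment_eq_suminf[OF sf] moment_eq_suminf[OF sg] divide_le_eq mult.commute)
qed

theorem lemmaA5:
  shows "(\<forall>f g (r::real). prob_density f \<longrightarrow> prob_density g \<longrightarrow> 1 \<le> r \<longrightarrow>
            d_star r f g \<le> ereal (constC powr r) * d_metric r f g \<and>
            d_metric r f g \<le> max (ereal (2 powr (r + 1))) (ereal (constB powr r) * d_star r f g))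
       \<and> (\<forall>r::real. 1 < r \<and> r \<le> 2 \<longrightarrow>
            (\<exists>c::real. \<forall>f g. prob_density f \<longrightarrow> prob_density g \<longrightarrow>
                moment 1 f = moment 1 g \<longrightarrow> moment r f < \<infinity> \<longrightarrow> moment r g < \<infinity> \<longrightarrow>
                d_star r f g \<le> ereal c * (moment r f + moment r g)))"
proof (intro conjI allI impI)
  fix f g and r :: real
  assume "prob_density f" "prob_density g" "1 \<le> r"
  then show "d_star r f g \<le> ereal (constC powr r) * d_metric r f g"
    and "d_metric r f g \<le> max (ereal (2 powr (r + 1))) (ereal (constB powr r) * d_star r f g)"
    by (auto intro: d_star_le_d_metric d_metric_le_d_star)
next
  fix r :: real
  assume "1 < r \<and> r \<le> 2"
  then show "\<exists>c::real. \<forall>f g. prob_density f \<longrightarrow> prob_density g \<longrightarrow>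
                moment 1 f = moment 1 g \<longrightarrow> moment r f < \<infinity> \<longrightarrow> moment r g < \<infinity> \<longrightarrow>
                d_star r f g \<le> ereal c * (moment r f + moment r g)"
    by (intro exI[of _ 1]) (simp add: d_star_le_moment_sum)
qed

end
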